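(* Let $X,Y$ be Banach spaces, let $F:X\rightrightarrows Y$ be a closed convex set-valued mapping, let $A\subset X$ be a closed convex set, let $\bar y\in Y$, put $S:=F^{-1}(\bar y)\cap A$, and let $\bar x\in S$. Let $\eta\in(0,+\infty)$ be such that $$DF^{-1}(\bar y,\bar x)(\eta_1B_Y)\cap(T(A,\bar x)+\eta_2B_X)\subset B_X\quad\text{for all }\eta_1,\eta_2\ge0\text{ with }\eta_1+\eta_2<\eta.$$ Then $S=\{\bar x\}$.
   Context: $B_X,B_Y$ are the closed unit balls. $F$ closed convex means ${\rm gph}(F)=\{(x,y):y\in F(x)\}$ is closed and convex in $X\times Y$. For a closed convex set $C$ and $a\in C$, the contingent cone $T(C,a)$ is the set of $v$ for which there exist $v_n\to v$, $t_n\to0^+$ with $a+t_nv_n\in C$ for all $n$. For $(x,y)\in{\rm gph}(F)$, $DF^{-1}(y,x)(v):=\{u\in X:(u,v)\in T({\rm gph}(F),(x,y))\}$ and $DF^{-1}(y,x)(W)=\bigcup_{v\in W}DF^{-1}(y,x)(v)$ for $W\subset Y$. *)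

theory Defs
  imports "HOL-Analysis.Analysis"
begin

text \<open>A set-valued map F from X to Y is represented by its graph gph F, a subset of X times Y.\<close>

definition contingent_cone :: "'a::real_normed_vector set \<Rightarrow> 'a \<Rightarrow> 'a set" where
  "contingent_cone C a = {v. \<exists>vs ts. (vs \<longlonglongrightarrow> v) \<and> (ts \<longlonglongrightarrow> 0) \<and>
       (\<forall>n. ts n > (0::real)) \<and> (\<forall>n. a + ts n *\<^sub>R vs n \<in> C)}"

definition graph_deriv_inv ::
  "('a::real_normed_vector \<times> 'b::real_normed_vector) set \<Rightarrow> 'b \<Rightarrow> 'a \<Rightarrow> 'b \<Rightarrow> 'a set" where
  "graph_deriv_inv G y x v = {u. (u, v) \<in> contingent_cone G (x, y)}"

definition graph_deriv_inv_set ::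
  "('a::real_normed_vector \<times> 'b::real_normed_vector) set \<Rightarrow> 'b \<Rightarrow> 'a \<Rightarrow> 'b set \<Rightarrow> 'a set" where
  "graph_deriv_inv_set G y x W = (\<Union>v\<in>W. graph_deriv_inv G y x v)"

end

theory Submission
  imports Defs
begin

text \<open>Already the hypothesis with \<open>\<eta>1 = \<eta>2 = 0\<close> suffices: the cone
  \<open>DF\<^sup>-\<^sup>1(ybar, xbar)(0) \<inter> T(A, xbar)\<close> lies in the unit ball, hence is \<open>{0}\<close>.
  By convexity, every \<open>x \<in> S\<close> gives the direction \<open>(x - xbar, 0)\<close> in the contingent cone
  of the graph at \<open>(xbar, ybar)\<close> and \<open>x - xbar\<close> in \<open>T(A, xbar)\<close>, so \<open>x = xbar\<close>.\<close>

lemma contingent_cone_scaleR: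
  fixes C :: "'a::real_normed_vector set"
  assumes "v \<in> contingent_cone C a" and "c > 0"
  shows "c *\<^sub>R v \<in> contingent_cone C a"
proof -
  obtain vs ts where vs: "vs \<longlonglongrightarrow> v" and ts: "ts \<longlonglongrightarrow> 0"
    and pos: "\<forall>n. ts n > 0" and mem: "\<forall>n. a + ts n *\<^sub>R vs n \<in> C"
    using assms(1) unfolding contingent_cone_def by blast
  have "(\<lambda>n. c *\<^sub>R vs n) \<longlonglongrightarrow> c *\<^sub>R v"
    using vs by (intro tendsto_scaleR tendsto_const)
  moreover have "(\<lambda>n. ts n / c) \<longlonglongrightarrow> 0"
    using tendsto_divide_zero[OF ts] .
  moreover have "\<forall>n. ts n / c > 0"
    using pos assms(2) by simp
  moreover have "a + (ts n / c) *\<^sub>R (c *\<^sub>R vs n) \<in> C" for n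
    using mem assms(2) by simp
  ultimately show ?thesis
    unfolding contingent_cone_def by blast
qed

lemma convex_diff_in_contingent_cone:
  fixes C :: "'a::real_normed_vector set"
  assumes "convex C" and "a \<in> C" and "b \<in> C"
  shows "b - a \<in> contingent_cone C a"
proof -
  define ts where "ts n = inverse (real (Suc n))" for n
  have "ts \<longlonglongrightarrow> 0"
    unfolding ts_def by (rule LIMSEQ_inverse_real_of_nat)
  moreover have "\<forall>n. ts n > 0"
    unfolding ts_def by simp
  moreover have "a + ts n *\<^sub>R (b - a) \<in> C" for n
  proof -
    have "0 \<le> ts n" "ts n \<le> 1"
      unfolding ts_def by (auto simp: field_simps)
    then have "(1 - ts n) *\<^sub>R a + ts n *\<^sub>R b \<in> C"
      using assms by (simp add: convexD_alt)
    then show ?thesis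
      by (simp add: algebra_simps)
  qed
  ultimately show ?thesis
    unfolding contingent_cone_def by (intro CollectI exI[of _ "\<lambda>_. b - a"] exI[of _ ts]) auto
qed

theorem proposition3p1:
  fixes G :: "('a::banach \<times> 'b::banach) set"
    and A :: "'a set" and ybar :: 'b and xbar :: 'a and \<eta> :: real
  assumes "closed G" and "convex G"
    and "closed A" and "convex A"
    and "xbar \<in> {x. (x, ybar) \<in> G} \<inter> A"
    and "\<eta> > 0"
    and "\<And>\<eta>1 \<eta>2. \<eta>1 \<ge> 0 \<Longrightarrow> \<eta>2 \<ge> 0 \<Longrightarrow> \<eta>1 + \<eta>2 < \<eta> \<Longrightarrow>
           graph_deriv_inv_set G ybar xbar (cball 0 \<eta>1) \<inter>
             {t + b | t b. t \<in> contingent_cone A xbar \<and> b \<in> cball 0 \<eta>2}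
           \<subseteq> cball 0 1"
  shows "{x. (x, ybar) \<in> G} \<inter> A = {xbar}"
proof -
  have small: "u \<in> cball 0 1"
    if "(u, 0) \<in> contingent_cone G (xbar, ybar)" and "u \<in> contingent_cone A xbar" for u
  proof -
    have "u \<in> graph_deriv_inv_set G ybar xbar (cball 0 0)"
      using that(1) unfolding graph_deriv_inv_set_def graph_deriv_inv_def by auto
    moreover have "u \<in> {t + b | t b. t \<in> contingent_cone A xbar \<and> b \<in> cball 0 0}"
      using that(2) by force
    moreover have "graph_deriv_inv_set G ybar xbar (cball 0 0) \<inter>
        {t + b | t b. t \<in> contingent_cone A xbar \<and> b \<in> cball 0 0} \<subseteq> cball 0 1"
      using assms(7)[of 0 0] assms(6) by simp
    ultimately show ?thesis
      by blast
  qed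
  have "x = xbar" if x: "(x, ybar) \<in> G" "x \<in> A" for x
  proof (rule ccontr)
    assume "x \<noteq> xbar"
    define c where "c = 2 / norm (x - xbar)"
    have "c > 0" and norm_2: "norm (c *\<^sub>R (x - xbar)) = 2"
      using \<open>x \<noteq> xbar\<close> unfolding c_def by auto
    have "(x, ybar) - (xbar, ybar) \<in> contingent_cone G (xbar, ybar)"
      using convex_diff_in_contingent_cone[OF assms(2), of "(xbar, ybar)" "(x, ybar)"] assms(5) x
      by simp
    then have "(c *\<^sub>R (x - xbar), 0) \<in> contingent_cone G (xbar, ybar)"
      using contingent_cone_scaleR[OF _ \<open>c > 0\<close>] by fastforce
    moreover have "c *\<^sub>R (x - xbar) \<in> contingent_cone A xbar"
      using contingent_cone_scaleR[OF convex_diff_in_contingent_cone[OF assms(4)] \<open>c > 0\<close>]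
        assms(5) x by auto
    ultimately show False
      using small norm_2 by fastforce
  qed
  then show ?thesis
    using assms(5) by blast
qed

end
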